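(* Consider the full-duplex (FD) single-stage relay selection (SRS) scheme described in the context, with $\varpi=1$, thresholds $\gamma_{th_j}=2^{R_{D_j}}-1$ for $j=1,2$, and power coefficients satisfying $0<a_1<a_2$, $a_1+a_2=1$, $a_2>a_1\gamma_{th_2}$. Then its diversity order is zero: $$-\lim_{\rho\to\infty}\frac{\log P_{SRS}^{FD}(\rho)}{\log\rho}=0 .$$
   Context: Network model. A base station (BS) is at the origin of the plane. There are $K\ge 1$ relays $R_1,\dots,R_K$ whose positions are i.i.d. uniformly distributed in the disc of radius $R_{\mathcal D}>0$ centred at the origin; $d_{SR_i}$ is the distance from the BS to $R_i$. Two users $D_1,D_2$ are at fixed points of the plane at distances $d_1,d_2>0$ from the BS, and $d_{R_iD_j}$ is the Euclidean distance between $R_i$ and $D_j$. Let $\alpha>0$ be the path loss exponent. The random variables $g_{SR_i}$, $g_{R_iD_1}$, $g_{R_iD_2}$ ($i=1,\dots,K$) are exponentially distributed with mean $1$ (squared magnitudes of $\mathcal{CN}(0,1)$ Rayleigh coefficients), $Z_i$ ($i=1,\dots,K$) is exponentially distributed with mean $\Omega_{LI}>0$ (loop-interference gain at $R_i$), and all of these are mutually independent and independent of the relay positions. Put $X_i=g_{SR_i}/(1+d_{SR_i}^\alpha)$ and $Y_{ji}=g_{R_iD_j}/(1+d_{R_iD_j}^\alpha)$. Let $\rho>0$ be the transmit SNR, $a_1,a_2$ power allocation coefficients, and $\varpi\in\{0,1\}$ the duplex factor. Define $\gamma_{D_2\to R_i}=\frac{\rho X_i a_2}{\rho X_i a_1+\rho\varpi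 Z_i+1}$, $\gamma_{D_1\to R_i}=\frac{\rho X_i a_1}{\rho\varpi Z_i+1}$, $\gamma^{(i)}_{D_2\to D_1}=\frac{\rho Y_{1i}a_2}{\rho Y_{1i}a_1+1}$, $\gamma^{(i)}_{D_1}=\rho Y_{1i}a_1$, $\gamma^{(i)}_{D_2}=\frac{\rho Y_{2i}a_2}{\rho Y_{2i}a_1+1}$. Target rates $R_{D_1},R_{D_2}>0$ are given; in FD mode $\varpi=1$ and $\gamma_{th_j}=2^{R_{D_j}}-1$; in HD mode $\varpi=0$ and $\gamma_{th_j}=2^{2R_{D_j}}-1$. SRS scheme: with $W_i=\min\{\gamma_{D_2\to R_i},\gamma^{(i)}_{D_2\to D_1},\gamma^{(i)}_{D_2}\}$, the outage probability is $P_{SRS}(\rho)=\Pr(\max_{1\le i\le K}W_i<\gamma_{th_2})$; $P_{SRS}^{FD}$ denotes it in FD mode. *)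

theory Defs
  imports "HOL-Probability.Probability"
begin

text \<open>Points of the plane are modelled as real \<times> real; the norm on real \<times> real is Euclidean.
  One relay's randomness: (position, g_SR, g_RD1, g_RD2, Z).\<close>

type_synonym relay_sample = "(real \<times> real) \<times> real \<times> real \<times> real \<times> real"

definition exp_mean :: "real \<Rightarrow> real measure" where
  "exp_mean m = density lborel (\<lambda>x. ennreal (exponential_density (1 / m) x))"

definition relay_measure :: "real \<Rightarrow> real \<Rightarrow> relay_sample measure" where
  "relay_measure RD Omega =
     uniform_measure lborel (cball (0::real\<times>real) RD) \<Otimes>\<^sub>M
     (exp_mean 1 \<Otimes>\<^sub>M (exp_mean 1 \<Otimes>\<^sub>M (exp_mean 1 \<Otimes>\<^sub>M exp_mean Omega)))"

definition pathloss :: "real \<Rightarrow> real \<Rightarrow> real" where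
  "pathloss alpha d = 1 + d powr alpha"

definition W_relay ::
  "real \<Rightarrow> real \<times> real \<Rightarrow> real \<times> real \<Rightarrow> real \<Rightarrow> real \<Rightarrow> real \<Rightarrow> real \<Rightarrow> relay_sample \<Rightarrow> real" where
  "W_relay alpha D1 D2 a1 a2 varpi rho s =
     (case s of (p, gSR, g1, g2, Z) \<Rightarrow>
       let X = gSR / pathloss alpha (norm p);
           Y1 = g1 / pathloss alpha (dist p D1);
           Y2 = g2 / pathloss alpha (dist p D2);
           gD2R = rho * X * a2 / (rho * X * a1 + rho * varpi * Z + 1);
           gD2D1 = rho * Y1 * a2 / (rho * Y1 * a1 + 1);
           gD2 = rho * Y2 * a2 / (rho * Y2 * a1 + 1)
       in min gD2R (min gD2D1 gD2))"

definition P_SRS ::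
  "nat \<Rightarrow> real \<Rightarrow> real \<Rightarrow> real \<Rightarrow> real \<times> real \<Rightarrow> real \<times> real \<Rightarrow> real \<Rightarrow> real \<Rightarrow> real \<Rightarrow> real \<Rightarrow> real \<Rightarrow> real" where
  "P_SRS K RD Omega alpha D1 D2 a1 a2 varpi th2 rho =
     measure (PiM {1..K} (\<lambda>_. relay_measure RD Omega))
       {\<omega> \<in> space (PiM {1..K} (\<lambda>_. relay_measure RD Omega)).
          Max ((\<lambda>i. W_relay alpha D1 D2 a1 a2 varpi rho (\<omega> i)) ` {1..K}) < th2}"

end

theory Submission
  imports Defs
begin

text \<open>Loop interference caps the first-hop SINR independently of the transmit SNR:
  \<open>\<gamma>_D2\<rightarrow>R_i < a2 X_i / Z_i\<close>. So whenever every relay has \<open>g_SR_i \<le> 1\<close> (hence \<open>X_i \<le> 1\<close>)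
  and \<open>Z_i > a2 / \<gamma>_th2\<close>, the scheme is in outage; by independence this event has probability
  \<open>p^K > 0\<close> with \<open>p\<close> not depending on \<open>\<rho>\<close>. Hence \<open>p^K \<le> P_SRS(\<rho>) \<le> 1\<close>, \<open>log P_SRS(\<rho>)\<close>
  stays bounded, and dividing by \<open>log \<rho>\<close> gives 0.\<close>

lemma space_exp_mean [simp]: "space (exp_mean m) = UNIV"
  by (simp add: exp_mean_def)

lemma sets_exp_mean [simp]: "sets (exp_mean m) = sets borel"
  by (simp add: exp_mean_def)

lemma prob_space_exp_mean: "m > 0 \<Longrightarrow> prob_space (exp_mean m)"
  unfolding exp_mean_def by (rule prob_space_exponential_density) simp

lemma measure_exp_mean_atMost:
  assumes "m > 0" "a \<ge> 0"
  shows "measure (exp_mean m) {..a} = 1 - exp (- a / m)"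
proof -
  have "emeasure (exp_mean m) {..a} = erlang_CDF 0 (1 / m) a"
    unfolding exp_mean_def using assms by (intro emeasure_erlang_density) simp
  moreover have "exp (- (a / m)) \<le> 1" using assms by simp
  ultimately show ?thesis using assms by (simp add: measure_def erlang_CDF_def)
qed

lemma measure_exp_mean_greaterThan:
  assumes "m > 0" "a \<ge> 0"
  shows "measure (exp_mean m) {a<..} = exp (- a / m)"
proof -
  interpret prob_space "exp_mean m" using assms(1) by (rule prob_space_exp_mean)
  have "{a<..} = space (exp_mean m) - {..a}" by auto
  then have "measure (exp_mean m) {a<..} = 1 - measure (exp_mean m) {..a}"
    using prob_compl[of "{..a}"] by simp
  then show ?thesis using measure_exp_mean_atMost[OF assms] by simp
qed

lemma measure_exp_mean_greaterThanAtMost: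
  assumes "m > 0" "0 \<le> a" "a \<le> b"
  shows "measure (exp_mean m) {a<..b} = exp (- a / m) - exp (- b / m)"
proof -
  interpret prob_space "exp_mean m" using assms by (intro prob_space_exp_mean)
  have "{a<..b} = {..b} - {..a}" by auto
  then have "measure (exp_mean m) {a<..b} = measure (exp_mean m) {..b} - measure (exp_mean m) {..a}"
    using assms by (simp add: finite_measure_Diff)
  then show ?thesis using assms by (simp add: measure_exp_mean_atMost)
qed

lemma prob_space_uniform_cball:
  assumes "r > 0"
  shows "prob_space (uniform_measure lborel (cball (c::'a::euclidean_space) r))"
proof (rule prob_space_uniform_measure)
  have "emeasure lborel (cball c r) = ennreal (measure lborel (cball c r))"
    using emeasure_lborel_cball_finite[of c r] by (intro emeasure_eq_ennreal_measure) auto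
  then show "emeasure lborel (cball c r) \<noteq> 0"
    using content_cball_pos[OF assms, of c] by simp
qed (rule less_imp_neq[OF emeasure_lborel_cball_finite])

lemma prob_space_relay_measure:
  "RD > 0 \<Longrightarrow> Omega > 0 \<Longrightarrow> prob_space (relay_measure RD Omega)"
  unfolding relay_measure_def
  by (intro prob_space_pair prob_space_exp_mean prob_space_uniform_cball) auto

lemma emeasure_relay_measure_Times:
  assumes RD: "RD > 0" and Omega: "Omega > 0"
    and A: "A \<in> sets borel" and B: "B \<in> sets borel"
  shows "emeasure (relay_measure RD Omega) (UNIV \<times> A \<times> UNIV \<times> UNIV \<times> B)
    = emeasure (exp_mean 1) A * emeasure (exp_mean Omega) B"
proof -
  interpret E1: prob_space "exp_mean 1" by (simp add: prob_space_exp_mean)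
  interpret EO: prob_space "exp_mean Omega" using Omega by (rule prob_space_exp_mean)
  interpret P3: prob_space "exp_mean 1 \<Otimes>\<^sub>M exp_mean Omega"
    by (intro prob_space_pair E1.prob_space_axioms EO.prob_space_axioms)
  interpret P2: prob_space "exp_mean 1 \<Otimes>\<^sub>M (exp_mean 1 \<Otimes>\<^sub>M exp_mean Omega)"
    by (intro prob_space_pair E1.prob_space_axioms P3.prob_space_axioms)
  interpret P1: prob_space "exp_mean 1 \<Otimes>\<^sub>M (exp_mean 1 \<Otimes>\<^sub>M (exp_mean 1 \<Otimes>\<^sub>M exp_mean Omega))"
    by (intro prob_space_pair E1.prob_space_axioms P2.prob_space_axioms)
  interpret U: prob_space "uniform_measure lborel (cball (0::real \<times> real) RD)"
    using RD by (rule prob_space_uniform_cball)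
  have "emeasure (exp_mean 1 \<Otimes>\<^sub>M exp_mean Omega) (UNIV \<times> B) = emeasure (exp_mean Omega) B"
    using EO.emeasure_pair_measure_Times[of UNIV "exp_mean 1" B] B E1.emeasure_space_1 by simp
  then have "emeasure (exp_mean 1 \<Otimes>\<^sub>M (exp_mean 1 \<Otimes>\<^sub>M exp_mean Omega)) (UNIV \<times> UNIV \<times> B)
      = emeasure (exp_mean Omega) B"
    using P3.emeasure_pair_measure_Times[of UNIV "exp_mean 1" "UNIV \<times> B"] B E1.emeasure_space_1
    by simp
  then have "emeasure (exp_mean 1 \<Otimes>\<^sub>M (exp_mean 1 \<Otimes>\<^sub>M (exp_mean 1 \<Otimes>\<^sub>M exp_mean Omega)))
      (A \<times> UNIV \<times> UNIV \<times> B) = emeasure (exp_mean 1) A * emeasure (exp_mean Omega) B"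
    using P2.emeasure_pair_measure_Times[of A "exp_mean 1" "UNIV \<times> UNIV \<times> B"] A B by simp
  moreover have "A \<times> UNIV \<times> UNIV \<times> B \<in> P1.events"
    using A B by (intro pair_measureI) auto
  then have "emeasure (relay_measure RD Omega)
      (space (uniform_measure lborel (cball 0 RD)) \<times> A \<times> UNIV \<times> UNIV \<times> B)
      = emeasure (exp_mean 1 \<Otimes>\<^sub>M (exp_mean 1 \<Otimes>\<^sub>M (exp_mean 1 \<Otimes>\<^sub>M exp_mean Omega)))
          (A \<times> UNIV \<times> UNIV \<times> B)"
    unfolding relay_measure_def
    by (simp only: P1.emeasure_pair_measure_Times[OF sets.top] U.emeasure_space_1 mult_1)
  ultimately show ?thesis by simp
qed

lemma measure_relay_measure_Times:
  assumes "RD > 0" "Omega > 0" "A \<in> sets borel" "B \<in> sets borel"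
  shows "measure (relay_measure RD Omega) (UNIV \<times> A \<times> UNIV \<times> UNIV \<times> B)
    = measure (exp_mean 1) A * measure (exp_mean Omega) B"
  unfolding measure_def using assms by (simp add: emeasure_relay_measure_Times enn2real_mult)

lemma W_relay_FD_less_threshold:
  assumes "0 \<le> rho" "0 < th" "0 \<le> a1" "0 \<le> a2"
    and "0 \<le> gSR" "gSR \<le> 1" "a2 / th < Z"
  shows "W_relay alpha D1 D2 a1 a2 1 rho (p, gSR, g1, g2, Z) < th"
proof -
  define X where "X = gSR / pathloss alpha (norm p)"
  have "pathloss alpha (norm p) \<ge> 1" by (simp add: pathloss_def)
  then have X: "0 \<le> X" "X \<le> 1"
    using assms by (auto simp: X_def divide_le_eq)
  have "0 \<le> th * (rho * X * a1)" using assms X by simp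
  have "a2 < th * Z" using assms by (simp add: pos_divide_less_eq mult.commute)
  have "rho * X * a2 \<le> rho * 1 * a2" using assms X by (intro mult_right_mono mult_left_mono) auto
  also have "\<dots> \<le> rho * (th * Z)" using \<open>a2 < th * Z\<close> assms by (simp add: mult_left_mono)
  also have "\<dots> < th * (rho * X * a1) + rho * (th * Z) + th"
    using \<open>0 \<le> th * (rho * X * a1)\<close> \<open>0 < th\<close> by linarith
  also have "\<dots> = th * (rho * X * a1 + rho * 1 * Z + 1)"
    by (simp add: algebra_simps)
  finally have "rho * X * a2 < th * (rho * X * a1 + rho * 1 * Z + 1)" .
  moreover have "0 \<le> Z"
    using assms divide_nonneg_pos[of a2 th] by linarith
  then have "0 < rho * X * a1 + rho * 1 * Z + 1"
    using assms X by (intro add_nonneg_pos add_nonneg_nonneg mult_nonneg_nonneg) auto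
  ultimately have "rho * X * a2 / (rho * X * a1 + rho * 1 * Z + 1) < th"
    by (simp add: pos_divide_less_eq mult.commute)
  then show ?thesis
    unfolding W_relay_def Let_def prod.case X_def[symmetric] by linarith
qed

lemma measurable_W_relay [measurable]:
  "W_relay alpha D1 D2 a1 a2 varpi rho \<in> borel_measurable (relay_measure RD Omega)"
  unfolding W_relay_def relay_measure_def exp_mean_def pathloss_def Let_def by measurable

lemma P_SRS_le_1:
  "RD > 0 \<Longrightarrow> Omega > 0 \<Longrightarrow> P_SRS K RD Omega alpha D1 D2 a1 a2 varpi th rho \<le> 1"
  unfolding P_SRS_def
  by (intro prob_space.prob_le_1 prob_space_PiM prob_space_relay_measure)

lemma P_SRS_ge_power:
  assumes "K \<ge> 1" "RD > 0" "Omega > 0" and B: "B \<in> sets (relay_measure RD Omega)"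
    and outage: "\<And>s. s \<in> B \<Longrightarrow> W_relay alpha D1 D2 a1 a2 varpi rho s < th"
  shows "measure (relay_measure RD Omega) B ^ K \<le> P_SRS K RD Omega alpha D1 D2 a1 a2 varpi th rho"
proof -
  define R where "R = relay_measure RD Omega"
  define P where "P = PiM {1..K} (\<lambda>_. R)"
  interpret R: prob_space R unfolding R_def using assms by (intro prob_space_relay_measure)
  interpret P: prob_space P unfolding P_def by (intro prob_space_PiM R.prob_space_axioms)
  interpret PS: product_sigma_finite "\<lambda>_. R"
    unfolding product_sigma_finite_def by (simp add: R.sigma_finite_measure_axioms)
  define E where "E = {\<omega> \<in> space P. \<forall>i\<in>{1..K}. W_relay alpha D1 D2 a1 a2 varpi rho (\<omega> i) < th}"
  have P_SRS_eq: "P_SRS K RD Omega alpha D1 D2 a1 a2 varpi th rho = P.prob E"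
    unfolding P_SRS_def E_def P_def R_def using \<open>K \<ge> 1\<close> by (subst Max_less_iff) auto
  have "E \<in> P.events" unfolding E_def P_def R_def by measurable
  moreover have "PiE {1..K} (\<lambda>_. B) \<subseteq> E"
  proof
    fix \<omega> assume \<omega>: "\<omega> \<in> PiE {1..K} (\<lambda>_. B)"
    then have "\<omega> \<in> space P"
      using sets.sets_into_space[OF B] unfolding P_def R_def by (auto simp: space_PiM)
    with \<omega> show "\<omega> \<in> E" unfolding E_def by (blast intro: outage PiE_mem)
  qed
  ultimately have "P.prob (PiE {1..K} (\<lambda>_. B)) \<le> P.prob E"
    by (rule P.finite_measure_mono[rotated])
  moreover have "emeasure P (PiE {1..K} (\<lambda>_. B)) = emeasure R B ^ K"
    using B unfolding P_def R_def[symmetric] by (simp add: PS.emeasure_PiM)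
  then have "P.prob (PiE {1..K} (\<lambda>_. B)) = R.prob B ^ K"
    by (simp add: P.emeasure_eq_measure R.emeasure_eq_measure ennreal_power)
  ultimately show ?thesis unfolding P_SRS_eq R_def by simp
qed

lemma tendsto_ln_over_ln_zero:
  fixes f :: "real \<Rightarrow> real"
  assumes "0 < c" and bounds: "eventually (\<lambda>x. c \<le> f x \<and> f x \<le> C) at_top"
  shows "((\<lambda>x. - (ln (f x) / ln x)) \<longlongrightarrow> 0) at_top"
proof (rule Lim_null_comparison)
  define M where "M = max \<bar>ln c\<bar> \<bar>ln C\<bar>"
  show "((\<lambda>x. M / ln x) \<longlongrightarrow> 0) at_top"
    by (intro tendsto_divide_0[OF tendsto_const] filterlim_at_top_imp_at_infinity ln_at_top)
  show "eventually (\<lambda>x. norm (- (ln (f x) / ln x)) \<le> M / ln x) at_top"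
    using bounds eventually_gt_at_top[of 1]
  proof eventually_elim
    case (elim x)
    then have "ln c \<le> ln (f x)" "ln (f x) \<le> ln C" using \<open>0 < c\<close> by auto
    then have "\<bar>ln (f x)\<bar> \<le> M" unfolding M_def by linarith
    then show ?case using \<open>x > 1\<close> by (simp add: abs_div divide_right_mono)
  qed
qed

theorem mainTheorem1:
  fixes K :: nat and RD Omega alpha a1 a2 RD1 RD2 :: real and D1 D2 :: "real \<times> real"
  assumes "K \<ge> 1" and "RD > 0" and "Omega > 0" and "alpha > 0"
    and "norm D1 > 0" and "norm D2 > 0"
    and "RD1 > 0" and "RD2 > 0"
    and "0 < a1" and "a1 < a2" and "a1 + a2 = 1"
    and "a2 > a1 * (2 powr RD2 - 1)"
  shows "((\<lambda>rho. - (ln (P_SRS K RD Omega alpha D1 D2 a1 a2 1 (2 powr RD2 - 1) rho) / ln rho))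
           \<longlongrightarrow> 0) at_top"
proof -
  define th where "th = 2 powr RD2 - (1::real)"
  have "th > 0" using \<open>RD2 > 0\<close> by (simp add: th_def)
  define B where "B = (UNIV \<times> {0<..1} \<times> UNIV \<times> UNIV \<times> {a2 / th<..} :: relay_sample set)"
  let ?R = "relay_measure RD Omega"
  interpret R: prob_space ?R using assms by (intro prob_space_relay_measure)
  have "B \<in> R.events"
    unfolding B_def relay_measure_def by (intro pair_measureI) auto
  have "measure (exp_mean 1) {0<..1} > 0" "measure (exp_mean Omega) {a2 / th<..} > 0"
    using assms \<open>th > 0\<close>
    by (simp_all add: measure_exp_mean_greaterThanAtMost measure_exp_mean_greaterThan)
  then have "R.prob B > 0"
    unfolding B_def using assms by (simp add: measure_relay_measure_Times)
  have "eventually (\<lambda>rho. R.prob B ^ K \<le> P_SRS K RD Omega alpha D1 D2 a1 a2 1 th rho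
      \<and> P_SRS K RD Omega alpha D1 D2 a1 a2 1 th rho \<le> 1) at_top"
    using eventually_ge_at_top[of 0]
  proof eventually_elim
    case (elim rho)
    have "W_relay alpha D1 D2 a1 a2 1 rho s < th" if "s \<in> B" for s
      using that elim assms \<open>th > 0\<close> by (auto simp: B_def intro!: W_relay_FD_less_threshold)
    then show ?case
      using assms \<open>B \<in> R.events\<close> by (simp add: P_SRS_ge_power P_SRS_le_1)
  qed
  with \<open>R.prob B > 0\<close> show ?thesis
    unfolding th_def by (intro tendsto_ln_over_ln_zero[of "R.prob B ^ K"]) auto
qed

end
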